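(* $\mathcal{H}_{N}'$ is generated as a Lie algebra by the elements $h_{\pm e_i}$ ($1\le i\le N$) and $h_{\pm e_j\pm e_k}$ ($1\le j<k\le N$).
   Context: $\mathbb{K}$ is an algebraically closed field of characteristic zero, $N=2m\ge2$ even, $e_1,\dots,e_N$ the standard basis of $\mathbb{Z}^N\subset\mathbb{K}^N$, $(\cdot,\cdot)$ the bilinear form with $(e_i,e_j)=\delta_{ij}$. Let $A_N=\mathbb{K}[t_1^{\pm1},\dots,t_N^{\pm1}]$, $d_i=t_i\frac{\partial}{\partial t_i}$, $t^{\bm r}=t_1^{r_1}\cdots t_N^{r_N}$, $D(u,\bm r)=\sum_i u_it^{\bm r}d_i$. Let $\bm J=\begin{pmatrix} O_m & I_m\\ -I_m & O_m\end{pmatrix}$, $\overline{\bm r}=\bm J\bm r$, $h_{\bm r}=D(\overline{\bm r},\bm r)$ (so $h_{\bm 0}=0$). $\mathcal{H}_N'=\operatorname{span}_{\mathbb{K}}\{h_{\bm r}:\bm r\in\mathbb{Z}^N\setminus\{\bm0\}\}$ is the Lie algebra with bracket $[h_{\bm r},h_{\bm s}]=(\overline{\bm r},\bm s)h_{\bm r+\bm s}$ (derived subalgebra of the Hamiltonian Lie algebra). *)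

theory Defs
  imports "HOL-Computational_Algebra.Polynomial"
begin

text \<open>Vectors of Z^N (N = 2m) are functions nat => int vanishing outside {0..<2m}
  (coordinates indexed 0..2m-1).\<close>

definition lat :: "nat \<Rightarrow> (nat \<Rightarrow> int) set" where
  "lat m = {r. \<forall>i. 2*m \<le> i \<longrightarrow> r i = 0}"

definition zerov :: "nat \<Rightarrow> int" where "zerov = (\<lambda>_. 0)"

definition vadd :: "(nat \<Rightarrow> int) \<Rightarrow> (nat \<Rightarrow> int) \<Rightarrow> (nat \<Rightarrow> int)" where
  "vadd r s = (\<lambda>i. r i + s i)"

definition vsmult :: "int \<Rightarrow> (nat \<Rightarrow> int) \<Rightarrow> (nat \<Rightarrow> int)" where
  "vsmult c r = (\<lambda>i. c * r i)"

definition unitv :: "nat \<Rightarrow> (nat \<Rightarrow> int)" where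
  "unitv i = (\<lambda>j. if j = i then 1 else 0)"

text \<open>rbar = J r with J = [[0, I_m], [-I_m, 0]].\<close>
definition Jb :: "nat \<Rightarrow> (nat \<Rightarrow> int) \<Rightarrow> (nat \<Rightarrow> int)" where
  "Jb m r = (\<lambda>i. if i < m then r (i + m) else if i < 2*m then - r (i - m) else 0)"

definition bil :: "nat \<Rightarrow> (nat \<Rightarrow> int) \<Rightarrow> (nat \<Rightarrow> int) \<Rightarrow> int" where
  "bil m r s = (\<Sum>i<2*m. r i * s i)"

text \<open>H_N' realised via its basis {h_r : r in Z^N, r \<noteq> 0}: an element is a finitely
  supported coefficient function on Z^N \ {0}.\<close>
definition hamH :: "nat \<Rightarrow> ((nat \<Rightarrow> int) \<Rightarrow> 'a::field) set" where
  "hamH m = {f. finite {r. f r \<noteq> 0} \<and> (\<forall>r. f r \<noteq> 0 \<longrightarrow> r \<in> lat m \<and> r \<noteq> zerov)}"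

definition hb :: "(nat \<Rightarrow> int) \<Rightarrow> ((nat \<Rightarrow> int) \<Rightarrow> 'a::field)" where
  "hb r = (\<lambda>s. if s = r then 1 else 0)"

text \<open>Bilinear extension of [h_r, h_s] = (rbar, s) h_(r+s).\<close>
definition hbr :: "nat \<Rightarrow> ((nat \<Rightarrow> int) \<Rightarrow> 'a::field) \<Rightarrow> ((nat \<Rightarrow> int) \<Rightarrow> 'a)
    \<Rightarrow> ((nat \<Rightarrow> int) \<Rightarrow> 'a)" where
  "hbr m f g = (\<lambda>t. \<Sum>p\<in>{(r, s). f r \<noteq> 0 \<and> g s \<noteq> 0 \<and> vadd r s = t}.
      of_int (bil m (Jb m (fst p)) (snd p)) * f (fst p) * g (snd p))"

inductive_set lie_gen :: "nat \<Rightarrow> ((nat \<Rightarrow> int) \<Rightarrow> 'a::field) set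
    \<Rightarrow> ((nat \<Rightarrow> int) \<Rightarrow> 'a) set"
  for m :: nat and S :: "((nat \<Rightarrow> int) \<Rightarrow> 'a) set" where
  base: "x \<in> S \<Longrightarrow> x \<in> lie_gen m S"
| zero: "(\<lambda>_. 0) \<in> lie_gen m S"
| add: "x \<in> lie_gen m S \<Longrightarrow> y \<in> lie_gen m S \<Longrightarrow> (\<lambda>r. x r + y r) \<in> lie_gen m S"
| smult: "x \<in> lie_gen m S \<Longrightarrow> (\<lambda>r. c * x r) \<in> lie_gen m S"
| bracket: "x \<in> lie_gen m S \<Longrightarrow> y \<in> lie_gen m S \<Longrightarrow> hbr m x y \<in> lie_gen m S"

definition gens :: "nat \<Rightarrow> ((nat \<Rightarrow> int) \<Rightarrow> 'a::field) set" where
  "gens m = {hb (vsmult a (unitv i)) | a i. a \<in> {1, -1} \<and> i < 2*m}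
     \<union> {hb (vadd (vsmult a (unitv j)) (vsmult b (unitv k))) | a b j k.
          a \<in> {1, -1} \<and> b \<in> {1, -1} \<and> j < k \<and> k < 2*m}"

end

theory Submission
  imports Defs
begin

text \<open>With \<open>\<omega>(s, t) = (J s, t)\<close> we have \<open>[h\<^sub>s, h\<^sub>t] = \<omega>(s, t) h\<^sub>s\<^sub>+\<^sub>t\<close>, so in characteristic zero
  \<open>h\<^sub>s\<^sub>+\<^sub>t\<close> lies in the generated subalgebra \<open>L\<close> whenever \<open>h\<^sub>s, h\<^sub>t \<in> L\<close> and \<open>\<omega>(s, t) \<noteq> 0\<close>.
  Call the coordinates \<open>k\<close> and \<open>k \<plusminus> m\<close> partners; \<open>\<omega>(e\<^sub>k, r)\<close> is \<open>\<plusminus>r\<close> at the partner of \<open>k\<close>.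
  Now \<open>h\<^sub>r \<in> L\<close> for \<open>r \<noteq> 0\<close> follows by induction on \<open>|r|\<^sub>1\<close>. If \<open>r\<close> is nonzero at two
  partners \<open>k, p\<close>, split off \<open>\<plusminus>e\<^sub>k\<close>. Otherwise take \<open>r\<^sub>k \<noteq> 0\<close> with partner \<open>p\<close>, so \<open>r\<^sub>p = 0\<close>.
  If \<open>|r\<^sub>k| \<ge> 2\<close>, then \<open>r = (\<plusminus>e\<^sub>k - e\<^sub>p) + w\<close> with \<open>w\<close> of the same norm but nonzero at both
  \<open>k\<close> and \<open>p\<close>. If \<open>r\<^sub>k = \<plusminus>1\<close> and some other \<open>r\<^sub>l \<noteq> 0\<close>, then \<open>r = (\<plusminus>e\<^sub>k \<plusminus> e\<^sub>l - e\<^sub>p) + w\<close>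
  with \<open>|w|\<^sub>1 = |r|\<^sub>1 - 1\<close>. Otherwise \<open>r = \<plusminus>e\<^sub>k\<close> is a generator. Conversely, the finitely
  supported functions on \<open>\<int>\<^sup>N - {0}\<close> are closed under the bracket because \<open>\<omega>(r, -r) = 0\<close>.\<close>

definition omega :: "nat \<Rightarrow> (nat \<Rightarrow> int) \<Rightarrow> (nat \<Rightarrow> int) \<Rightarrow> int" where
  "omega m s r = bil m (Jb m s) r"

lemma omega_eq: "omega m s r = (\<Sum>i<m. s (i + m) * r i - s i * r (i + m))"
proof -
  have split: "(\<Sum>i<m + m. f i) = (\<Sum>i<m. f i) + (\<Sum>i<m. f (i + m))" for f :: "nat \<Rightarrow> int"
    using sum.atLeastLessThan_concat[of 0 m "m + m" f] sum.atLeastLessThan_shift_bounds[of f 0 m m]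
    by (simp add: atLeast0LessThan add.commute)
  have "omega m s r = (\<Sum>i<m + m. Jb m s i * r i)"
    by (simp add: omega_def bil_def mult_2)
  also have "\<dots> = (\<Sum>i<m. Jb m s i * r i) + (\<Sum>i<m. Jb m s (i + m) * r (i + m))"
    by (rule split)
  also have "\<dots> = (\<Sum>i<m. s (i + m) * r i) + (\<Sum>i<m. - s i * r (i + m))"
    by (simp add: Jb_def)
  finally show ?thesis
    by (simp add: sum_subtractf sum_negf)
qed

lemma omega_vadd_left: "omega m (vadd s t) r = omega m s r + omega m t r"
  by (simp add: omega_eq vadd_def sum.distrib[symmetric] algebra_simps)

lemma omega_neg_right_eq_0: "omega m r (\<lambda>i. - r i) = 0"
  by (simp add: omega_eq algebra_simps)

definition partner :: "nat \<Rightarrow> nat \<Rightarrow> nat" where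
  "partner m k = (if k < m then k + m else k - m)"

definition partner_sign :: "nat \<Rightarrow> nat \<Rightarrow> int" where
  "partner_sign m k = (if k < m then -1 else 1)"

lemma partner_less: "k < 2*m \<Longrightarrow> partner m k < 2*m"
  unfolding partner_def by arith

lemma partner_partner: "k < 2*m \<Longrightarrow> partner m (partner m k) = k"
  unfolding partner_def by arith

lemma partner_neq: "k < 2*m \<Longrightarrow> partner m k \<noteq> k"
  unfolding partner_def by arith

lemma partner_sign_partner: "k < 2*m \<Longrightarrow> partner_sign m (partner m k) = - partner_sign m k"
  unfolding partner_def partner_sign_def by auto

lemma partner_sign_neq_0: "partner_sign m k \<noteq> 0"
  by (simp add: partner_sign_def)

lemma omega_unitv_left:
  assumes "k < 2*m"
  shows "omega m (vsmult c (unitv k)) r = c * partner_sign m k * r (partner m k)"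
proof (cases "k < m")
  case True
  have "omega m (vsmult c (unitv k)) r = (\<Sum>i<m. if i = k then - c * r (k + m) else 0)"
    unfolding omega_eq using True by (intro sum.cong) (auto simp: vsmult_def unitv_def)
  with True show ?thesis
    by (simp add: partner_sign_def partner_def)
next
  case False
  have "omega m (vsmult c (unitv k)) r = (\<Sum>i<m. if i = k - m then c * r (k - m) else 0)"
    unfolding omega_eq using False by (intro sum.cong) (auto simp: vsmult_def unitv_def)
  with False assms show ?thesis
    by (simp add: partner_sign_def partner_def)
qed

lemma hbr_hb_hb: "hbr m (hb s) (hb t) = (\<lambda>u. (of_int (omega m s t) :: 'a::field) * hb (vadd s t) u)"
proof
  fix u
  have "{(r, r'). (hb s r :: 'a) \<noteq> 0 \<and> (hb t r' :: 'a) \<noteq> 0 \<and> vadd r r' = u}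
      = (if vadd s t = u then {(s, t)} else {})"
    by (auto simp: hb_def)
  then show "hbr m (hb s) (hb t) u = (of_int (omega m s t) :: 'a) * hb (vadd s t) u"
    by (auto simp: hbr_def hb_def omega_def)
qed

lemma hb_vadd_mem_lie_gen:
  assumes "(hb s :: _ \<Rightarrow> 'a::field_char_0) \<in> lie_gen m S" "(hb t :: _ \<Rightarrow> 'a) \<in> lie_gen m S"
    and "omega m s t \<noteq> 0"
  shows "(hb (vadd s t) :: _ \<Rightarrow> 'a) \<in> lie_gen m S"
proof -
  let ?c = "of_int (omega m s t) :: 'a"
  have "(\<lambda>u. inverse ?c * hbr m (hb s) (hb t :: _ \<Rightarrow> 'a) u) \<in> lie_gen m S"
    using assms(1,2) by (intro lie_gen.smult lie_gen.bracket)
  moreover have "?c \<noteq> 0"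
    using assms(3) by simp
  ultimately show ?thesis
    by (simp add: hbr_hb_hb mult.assoc[symmetric])
qed

lemma mem_lie_gen_if_support_subset:
  assumes "finite A" and "\<forall>r\<in>A. (hb r :: _ \<Rightarrow> 'a::field) \<in> lie_gen m S" and "{r. f r \<noteq> 0} \<subseteq> A"
  shows "(f :: _ \<Rightarrow> 'a) \<in> lie_gen m S"
  using assms
proof (induction A arbitrary: f rule: finite_induct)
  case empty
  then have "f = (\<lambda>_. 0)"
    by auto
  then show ?case
    using lie_gen.zero by simp
next
  case (insert a A)
  have "f(a := 0) \<in> lie_gen m S"
    using insert by (intro insert.IH) auto
  moreover have "(\<lambda>r. f a * hb a r) \<in> lie_gen m S"
    using insert by (intro lie_gen.smult) auto
  ultimately have "(\<lambda>r. (f(a := 0)) r + f a * hb a r) \<in> lie_gen m S"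
    by (rule lie_gen.add)
  also have "(\<lambda>r. (f(a := 0)) r + f a * hb a r) = f"
    by (auto simp: hb_def)
  finally show ?case .
qed

definition l1norm :: "nat \<Rightarrow> (nat \<Rightarrow> int) \<Rightarrow> int" where
  "l1norm m r = (\<Sum>i<2*m. \<bar>r i\<bar>)"

definition paired :: "nat \<Rightarrow> (nat \<Rightarrow> int) \<Rightarrow> bool" where
  "paired m r \<longleftrightarrow> (\<exists>k<2*m. r k \<noteq> 0 \<and> r (partner m k) \<noteq> 0)"

lemma l1norm_nonneg: "0 \<le> l1norm m r"
  by (simp add: l1norm_def sum_nonneg)

lemma l1norm_upd:
  assumes "k < 2*m"
  shows "l1norm m (r(k := x)) = l1norm m r - \<bar>r k\<bar> + \<bar>x\<bar>"
proof -
  have k: "k \<in> {..<2*m}"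
    using assms by simp
  have "l1norm m r = \<bar>r k\<bar> + (\<Sum>i\<in>{..<2*m} - {k}. \<bar>r i\<bar>)"
    unfolding l1norm_def by (rule sum.remove[OF finite_lessThan k])
  moreover have "l1norm m (r(k := x)) = \<bar>x\<bar> + (\<Sum>i\<in>{..<2*m} - {k}. \<bar>r i\<bar>)"
    unfolding l1norm_def sum.remove[OF finite_lessThan k] by (auto intro: sum.cong)
  ultimately show ?thesis
    by simp
qed

lemma abs_minus_sgn: "(x :: int) \<noteq> 0 \<Longrightarrow> \<bar>x - sgn x\<bar> = \<bar>x\<bar> - 1"
  by (auto simp: sgn_if)

lemma sgn_mem_unit: "(x :: int) \<noteq> 0 \<Longrightarrow> sgn x \<in> {1, -1}"
  by (auto simp: sgn_if)

lemma nonzero_entry_neq_zerov: "v i \<noteq> 0 \<Longrightarrow> v \<noteq> zerov"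
  by (auto simp: zerov_def)

lemma lat_upd: "r \<in> lat m \<Longrightarrow> k < 2*m \<Longrightarrow> r(k := x) \<in> lat m"
  by (auto simp: lat_def)

lemma lat_nonzero_entry:
  assumes "r \<in> lat m" "r \<noteq> zerov"
  obtains k where "k < 2*m" "r k \<noteq> 0"
  using assms by (auto simp: lat_def zerov_def fun_eq_iff) (metis not_less)

lemma hb_unitv_mem_lie_gen:
  "a \<in> {1, -1} \<Longrightarrow> i < 2*m \<Longrightarrow> (hb (vsmult a (unitv i)) :: _ \<Rightarrow> 'a::field) \<in> lie_gen m (gens m)"
  unfolding gens_def by (intro lie_gen.base) blast

lemma hb_two_unitv_mem_lie_gen:
  assumes "a \<in> {1, -1}" "b \<in> {1, -1}" "j \<noteq> k" "j < 2*m" "k < 2*m"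
  shows "(hb (vadd (vsmult a (unitv j)) (vsmult b (unitv k))) :: _ \<Rightarrow> 'a::field) \<in> lie_gen m (gens m)"
proof (cases "j < k")
  case True
  with assms show ?thesis
    unfolding gens_def by (intro lie_gen.base) blast
next
  case False
  with assms(3) have "k < j"
    by simp
  with assms have "(hb (vadd (vsmult b (unitv k)) (vsmult a (unitv j))) :: _ \<Rightarrow> 'a) \<in> lie_gen m (gens m)"
    unfolding gens_def by (intro lie_gen.base) blast
  moreover have "vadd (vsmult b (unitv k)) (vsmult a (unitv j)) = vadd (vsmult a (unitv j)) (vsmult b (unitv k))"
    by (auto simp: vadd_def)
  ultimately show ?thesis
    by simp
qed

lemma hb_mem_lie_gen_if_paired:
  assumes IH: "\<And>w. w \<in> lat m \<Longrightarrow> w \<noteq> zerov \<Longrightarrow> l1norm m w < l1norm m r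
      \<Longrightarrow> (hb w :: _ \<Rightarrow> 'a::field_char_0) \<in> lie_gen m (gens m)"
    and r: "r \<in> lat m" and "paired m r"
  shows "(hb r :: _ \<Rightarrow> 'a) \<in> lie_gen m (gens m)"
proof -
  obtain k where k: "k < 2*m" "r k \<noteq> 0" "r (partner m k) \<noteq> 0"
    using \<open>paired m r\<close> by (auto simp: paired_def)
  define c where "c = sgn (r k)"
  define w where "w = r(k := r k - c)"
  have c: "c \<in> {1, -1}"
    unfolding c_def using k(2) by (rule sgn_mem_unit)
  have w_partner: "w (partner m k) = r (partner m k)"
    using partner_neq[OF k(1)] by (simp add: w_def)
  have "l1norm m w < l1norm m r"
    using l1norm_upd[OF k(1)] abs_minus_sgn[OF k(2)] by (simp add: w_def c_def)
  moreover have "w \<noteq> zerov"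
    using w_partner k(3) by (metis nonzero_entry_neq_zerov)
  ultimately have hw: "(hb w :: _ \<Rightarrow> 'a) \<in> lie_gen m (gens m)"
    using IH lat_upd[OF r k(1)] by (simp add: w_def)
  have "omega m (vsmult c (unitv k)) w \<noteq> 0"
    using omega_unitv_left[OF k(1)] partner_sign_neq_0 w_partner k(3) c by auto
  then have "(hb (vadd (vsmult c (unitv k)) w) :: _ \<Rightarrow> 'a) \<in> lie_gen m (gens m)"
    by (rule hb_vadd_mem_lie_gen[OF hb_unitv_mem_lie_gen[OF c k(1)] hw])
  moreover have "vadd (vsmult c (unitv k)) w = r"
    by (auto simp: vadd_def vsmult_def unitv_def w_def)
  ultimately show ?thesis
    by simp
qed

lemma hb_mem_lie_gen_if_unpaired_large_entry:
  assumes paired_IH: "\<And>w. w \<in> lat m \<Longrightarrow> paired m w \<Longrightarrow> l1norm m w = l1norm m r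
      \<Longrightarrow> (hb w :: _ \<Rightarrow> 'a::field_char_0) \<in> lie_gen m (gens m)"
    and r: "r \<in> lat m" and "\<not> paired m r" and k: "k < 2*m" "2 \<le> \<bar>r k\<bar>"
  shows "(hb r :: _ \<Rightarrow> 'a) \<in> lie_gen m (gens m)"
proof -
  have rk: "r k \<noteq> 0"
    using k(2) by auto
  define p where "p = partner m k"
  have p: "p < 2*m" "p \<noteq> k" "partner m p = k" "partner_sign m p = - partner_sign m k"
    using partner_less[OF k(1)] partner_neq[OF k(1)] partner_partner[OF k(1)] partner_sign_partner[OF k(1)]
    by (simp_all add: p_def)
  have rp: "r p = 0"
    using \<open>\<not> paired m r\<close> k(1) rk by (auto simp: paired_def p_def)
  define c where "c = sgn (r k)"
  have c: "c \<in> {1, -1}"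
    unfolding c_def using rk by (rule sgn_mem_unit)
  have abs_c: "\<bar>r k - c\<bar> = \<bar>r k\<bar> - 1"
    unfolding c_def using rk by (rule abs_minus_sgn)
  define v where "v = vadd (vsmult c (unitv k)) (vsmult (-1) (unitv p))"
  define w where "w = r(k := r k - c, p := 1)"
  have w: "w k = r k - c" "w p = 1"
    using p(2) by (auto simp: w_def)
  have "w \<in> lat m"
    unfolding w_def using r k(1) p(1) by (intro lat_upd)
  moreover have "paired m w"
    unfolding paired_def using k w abs_c by (intro exI[of _ k]) (auto simp: p_def[symmetric])
  moreover have "l1norm m w = l1norm m r"
    using l1norm_upd[OF p(1), of "r(k := r k - c)" 1] l1norm_upd[OF k(1), of r "r k - c"] abs_c p(2) rp
    by (simp add: w_def)
  ultimately have hw: "(hb w :: _ \<Rightarrow> 'a) \<in> lie_gen m (gens m)"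
    by (rule paired_IH)
  have hv: "(hb v :: _ \<Rightarrow> 'a) \<in> lie_gen m (gens m)"
    unfolding v_def using c p(1,2) k(1) by (intro hb_two_unitv_mem_lie_gen) auto
  have "omega m v w = partner_sign m k * r k"
    unfolding v_def omega_vadd_left omega_unitv_left[OF k(1)] omega_unitv_left[OF p(1)]
    using p(3,4) by (simp add: p_def[symmetric] w algebra_simps)
  then have "omega m v w \<noteq> 0"
    using rk partner_sign_neq_0 by simp
  then have "(hb (vadd v w) :: _ \<Rightarrow> 'a) \<in> lie_gen m (gens m)"
    by (rule hb_vadd_mem_lie_gen[OF hv hw])
  moreover have "vadd v w = r"
    using p(2) rp by (auto simp: v_def w_def vadd_def vsmult_def unitv_def fun_eq_iff)
  ultimately show ?thesis
    by simp
qed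

lemma hb_three_unitv_mem_lie_gen:
  assumes "c \<in> {1, -1}" "b \<in> {1, -1}" "k < 2*m" "l < 2*m" "l \<noteq> k" "l \<noteq> partner m k"
  shows "(hb (vadd (vsmult c (unitv k)) (vadd (vsmult b (unitv l)) (vsmult (-1) (unitv (partner m k)))))
      :: _ \<Rightarrow> 'a::field_char_0) \<in> lie_gen m (gens m)"
proof (rule hb_vadd_mem_lie_gen)
  show "(hb (vsmult c (unitv k)) :: _ \<Rightarrow> 'a) \<in> lie_gen m (gens m)"
    using assms(1,3) by (rule hb_unitv_mem_lie_gen)
  show "(hb (vadd (vsmult b (unitv l)) (vsmult (-1) (unitv (partner m k)))) :: _ \<Rightarrow> 'a)
      \<in> lie_gen m (gens m)"
    using assms partner_less[OF assms(3)] by (intro hb_two_unitv_mem_lie_gen) auto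
  show "omega m (vsmult c (unitv k)) (vadd (vsmult b (unitv l)) (vsmult (-1) (unitv (partner m k)))) \<noteq> 0"
    unfolding omega_unitv_left[OF assms(3)] using assms(1,6) partner_sign_neq_0
    by (auto simp: vadd_def vsmult_def unitv_def)
qed

lemma hb_mem_lie_gen_if_unpaired_unit_entry:
  assumes IH: "\<And>w. w \<in> lat m \<Longrightarrow> w \<noteq> zerov \<Longrightarrow> l1norm m w < l1norm m r
      \<Longrightarrow> (hb w :: _ \<Rightarrow> 'a::field_char_0) \<in> lie_gen m (gens m)"
    and r: "r \<in> lat m" and unpaired: "\<not> paired m r"
    and k: "k < 2*m" "\<bar>r k\<bar> = 1" and l: "l < 2*m" "l \<noteq> k" "r l \<noteq> 0"
  shows "(hb r :: _ \<Rightarrow> 'a) \<in> lie_gen m (gens m)"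
proof -
  define p where "p = partner m k"
  have p: "p < 2*m" "p \<noteq> k" "partner m p = k"
    using partner_less[OF k(1)] partner_neq[OF k(1)] partner_partner[OF k(1)] by (simp_all add: p_def)
  have rp: "r p = 0"
    using unpaired k by (auto simp: paired_def p_def)
  have lp: "l \<noteq> p"
    using l(3) rp by auto
  define l' where "l' = partner m l"
  have l': "l' \<noteq> l" "l' \<noteq> k" "l' \<noteq> p" "r l' = 0"
    using partner_neq[OF l(1)] partner_partner[OF l(1)] partner_partner[OF k(1)] l lp unpaired
    by (auto simp: l'_def p_def paired_def)
  define c where "c = r k"
  have c: "c \<in> {1, -1}"
    using k(2) by (auto simp: c_def abs_if split: if_splits)
  define b where "b = sgn (r l)"
  have b: "b \<in> {1, -1}"
    unfolding b_def using l(3) by (rule sgn_mem_unit)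
  define v where "v = vadd (vsmult c (unitv k)) (vadd (vsmult b (unitv l)) (vsmult (-1) (unitv p)))"
  define w where "w = r(k := 0, l := r l - b, p := 1)"
  have hv: "(hb v :: _ \<Rightarrow> 'a) \<in> lie_gen m (gens m)"
    unfolding v_def p_def using c b k(1) l(1,2) lp by (intro hb_three_unitv_mem_lie_gen) (simp_all add: p_def)
  have w: "w p = 1" "w k = 0" "w l' = 0"
    using p(2) lp l' l(2) by (auto simp: w_def)
  have "w \<in> lat m"
    unfolding w_def using r k(1) l(1) p(1) by (intro lat_upd)
  moreover have "w \<noteq> zerov"
    using w(1) by (intro nonzero_entry_neq_zerov[of w p]) simp
  moreover have "l1norm m w < l1norm m r"
    using l1norm_upd[OF p(1), of "r(k := 0, l := r l - b)" 1] l1norm_upd[OF l(1), of "r(k := 0)" "r l - b"]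
      l1norm_upd[OF k(1), of r 0] abs_minus_sgn[OF l(3)] k(2) rp lp p(2) l(2)
    by (simp add: w_def b_def)
  ultimately have hw: "(hb w :: _ \<Rightarrow> 'a) \<in> lie_gen m (gens m)"
    by (rule IH)
  have "omega m v w = c * partner_sign m k"
    unfolding v_def omega_vadd_left omega_unitv_left[OF k(1)] omega_unitv_left[OF l(1)]
      omega_unitv_left[OF p(1)]
    by (simp add: p(3) w flip: p_def l'_def)
  then have "omega m v w \<noteq> 0"
    using c partner_sign_neq_0 by auto
  then have "(hb (vadd v w) :: _ \<Rightarrow> 'a) \<in> lie_gen m (gens m)"
    by (rule hb_vadd_mem_lie_gen[OF hv hw])
  moreover have "vadd v w = r"
    using p(2) lp l(2) rp by (auto simp: v_def w_def c_def b_def vadd_def vsmult_def unitv_def fun_eq_iff)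
  ultimately show ?thesis
    by simp
qed

lemma hb_mem_lie_gen_if_single_unit_entry:
  assumes r: "r \<in> lat m" and k: "k < 2*m" "\<bar>r k\<bar> = 1" and others: "\<forall>l<2*m. l \<noteq> k \<longrightarrow> r l = 0"
  shows "(hb r :: _ \<Rightarrow> 'a::field) \<in> lie_gen m (gens m)"
proof -
  have "r k \<in> {1, -1}"
    using k(2) by (auto simp: abs_if split: if_splits)
  then have "(hb (vsmult (r k) (unitv k)) :: _ \<Rightarrow> 'a) \<in> lie_gen m (gens m)"
    using k(1) by (rule hb_unitv_mem_lie_gen)
  moreover have "vsmult (r k) (unitv k) = r"
  proof
    fix i
    show "vsmult (r k) (unitv k) i = r i"
      using r others by (cases "i < 2*m") (auto simp: vsmult_def unitv_def lat_def)
  qed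
  ultimately show ?thesis
    by simp
qed

lemma hb_mem_lie_gen:
  assumes "r \<in> lat m" "r \<noteq> zerov"
  shows "(hb r :: _ \<Rightarrow> 'a::field_char_0) \<in> lie_gen m (gens m)"
  using assms
proof (induction "nat (l1norm m r)" arbitrary: r rule: less_induct)
  case less
  have IH: "(hb w :: _ \<Rightarrow> 'a) \<in> lie_gen m (gens m)"
    if "w \<in> lat m" "w \<noteq> zerov" "l1norm m w < l1norm m r" for w
    using less.hyps that l1norm_nonneg[of m w] by simp
  have paired_IH: "(hb w :: _ \<Rightarrow> 'a) \<in> lie_gen m (gens m)"
    if "w \<in> lat m" "paired m w" "l1norm m w = l1norm m r" for w
    using IH that(3) by (intro hb_mem_lie_gen_if_paired[OF _ that(1,2)]) auto
  obtain k where k: "k < 2*m" "r k \<noteq> 0"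
    using less.prems by (rule lat_nonzero_entry)
  have "\<bar>r k\<bar> = 1 \<or> 2 \<le> \<bar>r k\<bar>"
    using k(2) by linarith
  then consider (paired) "paired m r"
    | (large_entry) "\<not> paired m r" "2 \<le> \<bar>r k\<bar>"
    | (unit_entry) l where "\<not> paired m r" "\<bar>r k\<bar> = 1" "l < 2*m" "l \<noteq> k" "r l \<noteq> 0"
    | (single_entry) "\<bar>r k\<bar> = 1" "\<forall>l<2*m. l \<noteq> k \<longrightarrow> r l = 0"
    by blast
  then show ?case
  proof cases
    case paired
    then show ?thesis
      using hb_mem_lie_gen_if_paired IH less.prems(1) by blast
  next
    case large_entry
    then show ?thesis
      using hb_mem_lie_gen_if_unpaired_large_entry[OF paired_IH less.prems(1) _ k(1)] by blast
  next
    case unit_entry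
    then show ?thesis
      using hb_mem_lie_gen_if_unpaired_unit_entry[OF IH less.prems(1) _ k(1)] by blast
  next
    case single_entry
    then show ?thesis
      using hb_mem_lie_gen_if_single_unit_entry less.prems(1) k(1) by blast
  qed
qed

lemma hb_mem_hamH: "r \<in> lat m \<Longrightarrow> r \<noteq> zerov \<Longrightarrow> (hb r :: _ \<Rightarrow> 'a::field) \<in> hamH m"
  by (auto simp: hamH_def hb_def)

lemma gens_subset_hamH: "gens m \<subseteq> (hamH m :: ((nat \<Rightarrow> int) \<Rightarrow> 'a::field) set)"
proof
  fix x :: "(nat \<Rightarrow> int) \<Rightarrow> 'a"
  assume "x \<in> gens m"
  then obtain v i where "x = hb v" "v \<in> lat m" "v i \<noteq> 0"
    unfolding gens_def
  proof (elim UnE CollectE exE conjE)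
    fix a i
    assume "x = hb (vsmult a (unitv i))" "a \<in> {1, -1}" "i < 2*m"
    then show thesis
      by (intro that[of _ i]) (auto simp: lat_def vsmult_def unitv_def)
  next
    fix a b j k
    assume "x = hb (vadd (vsmult a (unitv j)) (vsmult b (unitv k)))" "a \<in> {1, -1}" "b \<in> {1, -1}"
      "j < k" "k < 2*m"
    then show thesis
      by (intro that[of _ j]) (auto simp: lat_def vadd_def vsmult_def unitv_def)
  qed
  then show "x \<in> hamH m"
    by (simp add: hb_mem_hamH nonzero_entry_neq_zerov)
qed

lemma hbr_neq_0E:
  assumes "hbr m f g t \<noteq> 0"
  obtains r s where "f r \<noteq> 0" "g s \<noteq> 0" "vadd r s = t" "omega m r s \<noteq> 0"
proof -
  obtain p where "p \<in> {(r, s). f r \<noteq> 0 \<and> g s \<noteq> 0 \<and> vadd r s = t}"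
      "of_int (omega m (fst p) (snd p)) * f (fst p) * g (snd p) \<noteq> 0"
    using assms unfolding hbr_def omega_def[symmetric] by (meson sum.neutral)
  then show ?thesis
    using that by (cases p) (auto, metis of_int_0)
qed

lemma hbr_mem_hamH:
  assumes x: "x \<in> hamH m" and y: "y \<in> hamH m"
  shows "hbr m x y \<in> hamH m"
proof -
  have "{t. hbr m x y t \<noteq> 0} \<subseteq> (\<lambda>(r, s). vadd r s) ` ({r. x r \<noteq> 0} \<times> {s. y s \<noteq> 0})"
    by (force elim: hbr_neq_0E)
  moreover have "finite ({r. x r \<noteq> 0} \<times> {s. y s \<noteq> 0})"
    using x y by (simp add: hamH_def)
  ultimately have "finite {t. hbr m x y t \<noteq> 0}"
    by (meson finite_imageI finite_subset)
  moreover have "t \<in> lat m \<and> t \<noteq> zerov" if nz: "hbr m x y t \<noteq> 0" for t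
  proof -
    obtain r s where rs: "x r \<noteq> 0" "y s \<noteq> 0" "vadd r s = t" "omega m r s \<noteq> 0"
      using nz by (rule hbr_neq_0E)
    have "r \<in> lat m" "s \<in> lat m"
      using rs x y by (auto simp: hamH_def)
    then have "t \<in> lat m"
      using rs(3) by (auto simp: lat_def vadd_def)
    moreover have "t \<noteq> zerov"
    proof
      assume "t = zerov"
      then have "s = (\<lambda>i. - r i)"
        using rs(3) by (auto simp: zerov_def vadd_def fun_eq_iff eq_neg_iff_add_eq_0 add.commute)
      then show False
        using rs(4) omega_neg_right_eq_0 by simp
    qed
    ultimately show ?thesis ..
  qed
  ultimately show ?thesis
    by (auto simp: hamH_def)
qed

lemma lie_gen_subset_hamH: "lie_gen m (gens m) \<subseteq> (hamH m :: ((nat \<Rightarrow> int) \<Rightarrow> 'a::field) set)"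
proof
  fix x :: "(nat \<Rightarrow> int) \<Rightarrow> 'a"
  assume "x \<in> lie_gen m (gens m)"
  then show "x \<in> hamH m"
  proof (induction rule: lie_gen.induct)
    case (base x)
    then show ?case
      using gens_subset_hamH by blast
  next
    case zero
    then show ?case
      by (simp add: hamH_def)
  next
    case (add x y)
    have "{r. x r + y r \<noteq> 0} \<subseteq> {r. x r \<noteq> 0} \<union> {r. y r \<noteq> 0}"
      by auto
    with add.IH show ?case
      by (auto simp: hamH_def intro: finite_subset)
  next
    case (smult x c)
    have "{r. c * x r \<noteq> 0} \<subseteq> {r. x r \<noteq> 0}"
      by auto
    with smult.IH show ?case
      by (auto simp: hamH_def intro: finite_subset)
  next
    case (bracket x y)
    with hbr_mem_hamH show ?case
      by blast
  qed
qed

theorem lemma4p1: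
  fixes m :: nat
  assumes "1 \<le> m"
    and "\<forall>p :: 'a::field_char_0 poly. 0 < degree p \<longrightarrow> (\<exists>x. poly p x = 0)"
  shows "lie_gen m (gens m) = (hamH m :: ((nat \<Rightarrow> int) \<Rightarrow> 'a) set)"
proof
  show "lie_gen m (gens m) \<subseteq> (hamH m :: ((nat \<Rightarrow> int) \<Rightarrow> 'a) set)"
    by (rule lie_gen_subset_hamH)
  show "(hamH m :: ((nat \<Rightarrow> int) \<Rightarrow> 'a) set) \<subseteq> lie_gen m (gens m)"
  proof
    fix f :: "(nat \<Rightarrow> int) \<Rightarrow> 'a"
    assume "f \<in> hamH m"
    then show "f \<in> lie_gen m (gens m)"
      by (intro mem_lie_gen_if_support_subset[of "{r. f r \<noteq> 0}"])
        (auto simp: hamH_def intro: hb_mem_lie_gen)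
  qed
qed

end
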